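(* Let $L=\{x: Ax\le b\}$ be a full-dimensional rational polytope in $\mathbb{R}^m$, $m\ge2$, where $A$ is an integral matrix with rows $a_1,\dots,a_n$ and $b$ is an integral vector. Suppose $a_1x\le b_1$ defines a facet of $L$ and its affine hull $\{x: a_1x=b_1\}$ contains no integer point. Let $\tilde A$ be $A$ with row $a_1$ removed and $\tilde b$ be $b$ with its first component removed. Then there exists a rational inequality $a'x\le b'$ such that $\tilde L:=\{x:\tilde Ax\le\tilde b,\ a'x\le b'\}$ contains the same integer points as $L$, $L\subseteq\tilde L$, and the hyperplane $\{x: a'x=b'\}$ contains integer points. *)

theory Defs
  imports "HOL-Analysis.Analysis"
begin

definition int_point :: "real^'m \<Rightarrow> bool" where
  "int_point x \<longleftrightarrow> (\<forall>j. x $ j \<in> \<int>)"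

definition rat_vec :: "real^'m \<Rightarrow> bool" where
  "rat_vec x \<longleftrightarrow> (\<forall>j. x $ j \<in> \<rat>)"

end

theory Submission
  imports Defs
begin

text \<open>Replace the facet inequality \<open>a\<^sub>0 x \<le> b\<^sub>0\<close> by its tilt \<open>(K a\<^sub>0 + e\<^sub>j) x \<le> K b\<^sub>0 + R\<close>,
  where \<open>R\<close> bounds the coordinate \<open>x\<^sub>j\<close> on the polytope. For \<open>K \<ge> 0\<close> the tilt is valid on
  the polytope. An integer point that satisfies the remaining inequalities but violates
  \<open>a\<^sub>0 x \<le> b\<^sub>0\<close> overshoots by at least 1; the segment from it to a point strictly inside the
  facet inequality crosses the facet hyperplane inside the polytope, which bounds its
  \<open>j\<close>-th coordinate from below linearly in the overshoot, so for large \<open>K\<close> the tilt cuts it off.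
  Taking \<open>K\<close> a multiple of a nonzero coordinate \<open>a\<^sub>0\<^sub>i\<close> (\<open>i \<noteq> j\<close>) makes the coefficients
  \<open>K a\<^sub>0\<^sub>i\<close> and \<open>K a\<^sub>0\<^sub>j + 1\<close> coprime, so the tilted hyperplane contains integer points.\<close>

lemma int_point_inner_Ints:
  assumes "int_point u" "int_point v"
  shows "u \<bullet> v \<in> \<int>"
  using assms unfolding int_point_def inner_vec_def
  by (intro Ints_sum) (auto simp: Ints_mult)

lemma exists_multiple_greater:
  fixes c :: int and x :: real
  assumes "c \<noteq> 0"
  shows "\<exists>K. c dvd K \<and> x < of_int K"
proof -
  define N where "N = max 1 (\<lfloor>x\<rfloor> + 1)"
  have "1 \<le> \<bar>c\<bar>"
    using assms by linarith
  then have "of_int N \<le> real_of_int (\<bar>c\<bar> * N)"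
    unfolding N_def of_int_le_iff by (intro mult_le_cancel_right1[THEN iffD2]) auto
  moreover have "x < of_int N"
    unfolding N_def by linarith
  ultimately show ?thesis
    by (intro exI[of _ "\<bar>c\<bar> * N"]) auto
qed

lemma int_point_on_tilted_hyperplane:
  fixes c :: "real^'m" and ci cj K T :: int
  assumes "i \<noteq> j" "c $ i = of_int ci" "c $ j = of_int cj" "ci dvd K"
  shows "\<exists>z. int_point z \<and> (of_int K *\<^sub>R c + axis j 1) \<bullet> z = of_int T"
proof -
  obtain M where K: "K = ci * M"
    using assms(4) by blast
  define z where
    "z = of_int (T * M * cj\<^sup>2) *\<^sub>R axis i (1::real) + of_int (T * (1 - K * cj)) *\<^sub>R axis j 1"
  have "int_point z"
    unfolding int_point_def z_def by (auto simp: axis_def)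
  have "(of_int K *\<^sub>R c + axis j 1) $ i = of_int (K * ci)"
    and "(of_int K *\<^sub>R c + axis j 1) $ j = of_int (K * cj + 1)"
    using assms(1-3) by (simp_all add: axis_def)
  then have "(of_int K *\<^sub>R c + axis j 1) \<bullet> z
      = of_int (T * M * cj\<^sup>2 * (K * ci) + T * (1 - K * cj) * (K * cj + 1))"
    unfolding z_def by (simp add: inner_add_right inner_axis)
  \<comment> \<open>Bezout: \<open>K c\<^sub>i \<cdot> M c\<^sub>j\<^sup>2 + (1 - K c\<^sub>j)(1 + K c\<^sub>j) = K\<^sup>2c\<^sub>j\<^sup>2 + 1 - K\<^sup>2c\<^sub>j\<^sup>2 = 1\<close>\<close>
  also have "\<dots> = of_int T"
    unfolding K by (simp add: power2_eq_square algebra_simps)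
  finally show ?thesis
    using \<open>int_point z\<close> by blast
qed

lemma convex_lower_bound_beyond_hyperplane:
  fixes Q :: "'a::real_inner set"
  assumes "convex Q" "y \<in> Q" "z \<in> Q"
    and "c \<bullet> y = d - s" "s > 0" "c \<bullet> z = d + t" "t \<ge> 0"
    and bound: "\<forall>x\<in>Q. c \<bullet> x \<le> d \<longrightarrow> \<bar>v \<bullet> x\<bar> \<le> B"
  shows "- B * (3 + 2 * t / s) \<le> v \<bullet> z"
proof -
  define l where "l = s / (s + t)"
  have l: "0 < l" "l \<le> 1"
    using assms(5,7) unfolding l_def by auto
  define w where "w = (1 - l) *\<^sub>R y + l *\<^sub>R z"
  have "w \<in> Q"
    unfolding w_def by (intro convexD_alt) (use assms l in auto)
  moreover have "c \<bullet> w = (1 - l) * (c \<bullet> y) + l * (c \<bullet> z)"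
    unfolding w_def by (simp add: inner_add_right)
  then have "c \<bullet> w = d - s + l * (s + t)"
    using assms(4,6) by (simp add: algebra_simps)
  then have "c \<bullet> w = d"
    using assms(5,7) unfolding l_def by simp
  ultimately have "\<bar>v \<bullet> w\<bar> \<le> B"
    using bound by auto
  moreover have "\<bar>v \<bullet> y\<bar> \<le> B"
    using bound assms(2,4,5) by auto
  moreover have "v \<bullet> w - v \<bullet> y = l * (v \<bullet> z - v \<bullet> y)"
    unfolding w_def by (simp add: inner_add_right algebra_simps)
  ultimately have "- 2 * B \<le> l * (v \<bullet> z - v \<bullet> y)"
    by linarith
  then have "- 2 * B * (s + t) \<le> s * (v \<bullet> z - v \<bullet> y)"
    using assms(5,7) unfolding l_def by (simp add: field_simps)
  then have "- 2 * B * (s + t) / s \<le> v \<bullet> z - v \<bullet> y"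
    using assms(5) by (simp add: field_simps)
  moreover have "- B * (3 + 2 * t / s) = - B - 2 * B * (s + t) / s"
    using assms(5) by (simp add: field_simps)
  ultimately show ?thesis
    using \<open>\<bar>v \<bullet> y\<bar> \<le> B\<close> by linarith
qed

lemma tilted_inequality_cuts_off:
  fixes Q :: "'a::real_inner set"
  assumes "convex Q" "y \<in> Q" "c \<bullet> y < d"
    and bound: "\<forall>x\<in>Q. c \<bullet> x \<le> d \<longrightarrow> \<bar>v \<bullet> x\<bar> \<le> B"
    and "B \<le> R" "2 * B / (d - c \<bullet> y) + 3 * B + R < K"
    and "z \<in> Q" "d + 1 \<le> c \<bullet> z"
  shows "K * d + R < (K *\<^sub>R c + v) \<bullet> z"
proof -
  define s where "s = d - c \<bullet> y"
  define t where "t = c \<bullet> z - d"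
  have "s > 0" "t \<ge> 1"
    using assms(3,8) unfolding s_def t_def by auto
  have "\<bar>v \<bullet> y\<bar> \<le> B"
    using bound assms(2,3) by simp
  then have "B \<ge> 0"
    by linarith
  have "- B * (3 + 2 * t / s) \<le> v \<bullet> z"
    by (rule convex_lower_bound_beyond_hyperplane[OF assms(1,2,7) _ \<open>s > 0\<close> _ _ bound])
      (use \<open>t \<ge> 1\<close> in \<open>simp_all add: s_def t_def\<close>)
  moreover have "(K *\<^sub>R c + v) \<bullet> z = K * d + K * t + v \<bullet> z"
    unfolding t_def by (simp add: inner_add_left algebra_simps)
  moreover have "- B * (3 + 2 * t / s) = - 3 * B - t * (2 * B / s)"
    by (simp add: algebra_simps)
  ultimately have "K * d + t * (K - 2 * B / s) - 3 * B \<le> (K *\<^sub>R c + v) \<bullet> z"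
    by (simp add: right_diff_distrib mult.commute)
  moreover have "K - 2 * B / s \<le> t * (K - 2 * B / s)"
    using assms(6) \<open>t \<ge> 1\<close> \<open>B \<ge> 0\<close> \<open>B \<le> R\<close> unfolding s_def
    by (intro mult_le_cancel_right1[THEN iffD2]) auto
  ultimately show ?thesis
    using assms(6) unfolding s_def by linarith
qed

lemma tilted_inequality_cuts_off_lattice_points:
  fixes Q :: "(real^'m) set"
  assumes "convex Q" "int_point c" "d \<in> \<int>" "y \<in> Q" "c \<bullet> y < d"
    and bound: "\<forall>x\<in>Q. c \<bullet> x \<le> d \<longrightarrow> \<bar>v \<bullet> x\<bar> \<le> B"
    and "B \<le> R" "2 * B / (d - c \<bullet> y) + 3 * B + R < K"
    and "z \<in> Q" "int_point z" "(K *\<^sub>R c + v) \<bullet> z \<le> K * d + R"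
  shows "c \<bullet> z \<le> d"
proof (rule ccontr)
  assume "\<not> c \<bullet> z \<le> d"
  moreover obtain u where "c \<bullet> z = of_int u"
    using int_point_inner_Ints[OF assms(2,10)] by (meson Ints_cases)
  moreover obtain e where "d = of_int e"
    using assms(3) by (meson Ints_cases)
  ultimately have "d + 1 \<le> c \<bullet> z"
    by simp
  with tilted_inequality_cuts_off[OF assms(1,4,5) bound assms(7,8,9)] assms(11) show False
    by linarith
qed

lemma exists_tilted_inequality:
  fixes c :: "real^'m" and Q :: "(real^'m) set"
  assumes "CARD('m) \<ge> 2" "convex Q" "int_point c" "d \<in> \<int>" "c \<noteq> 0"
    and "bounded (Q \<inter> {x. c \<bullet> x \<le> d})" "y \<in> Q" "c \<bullet> y < d"
  shows "\<exists>a' b'. rat_vec a' \<and> b' \<in> \<rat> \<and> a' \<noteq> 0 \<and>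
           Q \<inter> {x. c \<bullet> x \<le> d} \<subseteq> {x. a' \<bullet> x \<le> b'} \<and>
           (\<forall>z\<in>Q. int_point z \<longrightarrow> a' \<bullet> z \<le> b' \<longrightarrow> c \<bullet> z \<le> d) \<and>
           (\<exists>z. int_point z \<and> a' \<bullet> z = b')"
proof -
  obtain i where ci0: "c $ i \<noteq> 0"
    using assms(5) by (metis vec_eq_iff zero_index)
  have "\<exists>j::'m. j \<noteq> i"
    using assms(1) by (metis card_2_iff' ex_card)
  then obtain j where "j \<noteq> i"
    by blast
  obtain ci where ci: "c $ i = of_int ci"
    using assms(3) unfolding int_point_def by (meson Ints_cases)
  obtain cj where cj: "c $ j = of_int cj"
    using assms(3) unfolding int_point_def by (meson Ints_cases)
  obtain dd where dd: "d = of_int dd"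
    using assms(4) by (meson Ints_cases)
  obtain B where "\<forall>x\<in>Q \<inter> {x. c \<bullet> x \<le> d}. norm x \<le> B"
    using assms(6) bounded_iff by blast
  then have B: "\<forall>x\<in>Q. c \<bullet> x \<le> d \<longrightarrow> \<bar>axis j 1 \<bullet> x\<bar> \<le> B"
    using component_le_norm_cart order_trans by (fastforce simp: inner_axis')
  obtain K where "ci dvd K" and K: "2 * B / (d - c \<bullet> y) + 3 * B + of_int \<lceil>B\<rceil> < of_int K"
    using exists_multiple_greater[of ci] ci ci0 by auto
  define a' where "a' = of_int K *\<^sub>R c + axis j 1"
  define b' where "b' = of_int K * d + of_int \<lceil>B\<rceil>"
  have "0 \<le> B"
    using B assms(7,8) by force
  then have "0 < real_of_int K"
    using K assms(8) by (smt (verit) divide_nonneg_pos le_of_int_ceiling)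
  have "Q \<inter> {x. c \<bullet> x \<le> d} \<subseteq> {x. a' \<bullet> x \<le> b'}"
  proof safe
    fix x assume "x \<in> Q" "c \<bullet> x \<le> d"
    then have "of_int K * (c \<bullet> x) \<le> of_int K * d" "axis j 1 \<bullet> x \<le> of_int \<lceil>B\<rceil>"
      using B \<open>0 < real_of_int K\<close> mult_left_mono by (fastforce, smt (verit) le_of_int_ceiling)
    then show "a' \<bullet> x \<le> b'"
      unfolding a'_def b'_def by (simp add: inner_add_left)
  qed
  moreover have "c \<bullet> z \<le> d" if "z \<in> Q" "int_point z" "a' \<bullet> z \<le> b'" for z
    by (rule tilted_inequality_cuts_off_lattice_points[OF assms(2-4,7,8) B le_of_int_ceiling K that(1,2)])
      (use that(3) in \<open>simp only: a'_def b'_def\<close>)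
  moreover have "a' $ i = of_int K * c $ i"
    unfolding a'_def using \<open>j \<noteq> i\<close> by (simp add: axis_def)
  then have "a' \<noteq> 0"
    using ci0 \<open>0 < real_of_int K\<close> by auto
  moreover have "rat_vec a'"
    using assms(3) unfolding rat_vec_def int_point_def a'_def
    by (auto simp: axis_def intro!: Ints_subset_Rats[THEN subsetD])
  moreover have "\<exists>z. int_point z \<and> a' \<bullet> z = b'"
    using int_point_on_tilted_hyperplane[OF \<open>j \<noteq> i\<close>[symmetric] ci cj \<open>ci dvd K\<close>, of "K * dd + \<lceil>B\<rceil>"]
    unfolding a'_def b'_def dd by simp
  ultimately show ?thesis
    by (intro exI[of _ a'] exI[of _ b']) (auto simp: b'_def dd)
qed

theorem lemma7:
  fixes a :: "nat \<Rightarrow> real^'m" and b :: "nat \<Rightarrow> real" and n :: nat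
    and L :: "(real^'m) set"
  assumes m2: "CARD('m) \<ge> 2"
    and n1: "n \<ge> 1"
    and A_int: "\<forall>i<n. int_point (a i)"
    and b_int: "\<forall>i<n. b i \<in> \<int>"
    and L_def: "L = {x. \<forall>i<n. a i \<bullet> x \<le> b i}"
    and bounded: "bounded L"
    and full: "aff_dim L = int CARD('m)"
    and facet: "(L \<inter> {x. a 0 \<bullet> x = b 0}) facet_of L"
    and no_int: "\<not> (\<exists>z. int_point z \<and> a 0 \<bullet> z = b 0)"
  shows "\<exists>a' b'. rat_vec a' \<and> b' \<in> \<rat> \<and> a' \<noteq> 0 \<and>
           (let Lt = {x. (\<forall>i\<in>{1..<n}. a i \<bullet> x \<le> b i) \<and> a' \<bullet> x \<le> b'}
            in {z \<in> Lt. int_point z} = {z \<in> L. int_point z} \<and> L \<subseteq> Lt \<and>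
               (\<exists>z. int_point z \<and> a' \<bullet> z = b'))"
proof -
  define Q where "Q = {x. \<forall>i\<in>{1..<n}. a i \<bullet> x \<le> b i}"
  have "(\<forall>i<n. P i) \<longleftrightarrow> (\<forall>i\<in>{1..<n}. P i) \<and> P 0" for P
    using n1 by (metis atLeastLessThan_iff less_le_not_le less_one nle_le not_gr_zero)
  then have L_Q: "L = Q \<inter> {x. a 0 \<bullet> x \<le> b 0}"
    unfolding L_def Q_def by (simp only: Collect_conj_eq)
  have "convex Q"
    unfolding Q_def by (simp add: Collect_ball_eq convex_INT convex_halfspace_le)
  have "L \<inter> {x. a 0 \<bullet> x = b 0} \<noteq> {}" "L \<inter> {x. a 0 \<bullet> x = b 0} \<noteq> L"
    using facet unfolding facet_of_def by auto
  then obtain x1 y where "a 0 \<bullet> x1 = b 0" "y \<in> L" "a 0 \<bullet> y \<noteq> b 0"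
    by blast
  then have "y \<in> Q" "a 0 \<bullet> y < b 0"
    unfolding L_Q by auto
  moreover have "a 0 \<noteq> 0"
    using \<open>a 0 \<bullet> x1 = b 0\<close> \<open>a 0 \<bullet> y < b 0\<close> by auto
  moreover have "int_point (a 0)" "b 0 \<in> \<int>"
    using A_int b_int n1 by auto
  moreover have "bounded (Q \<inter> {x. a 0 \<bullet> x \<le> b 0})"
    using bounded L_Q by simp
  ultimately obtain a' b' where "rat_vec a'" "b' \<in> \<rat>" "a' \<noteq> 0"
    and "Q \<inter> {x. a 0 \<bullet> x \<le> b 0} \<subseteq> {x. a' \<bullet> x \<le> b'}"
    and "\<forall>z\<in>Q. int_point z \<longrightarrow> a' \<bullet> z \<le> b' \<longrightarrow> a 0 \<bullet> z \<le> b 0"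
    and "\<exists>z. int_point z \<and> a' \<bullet> z = b'"
    using exists_tilted_inequality[OF m2 \<open>convex Q\<close>] by metis
  moreover have "{x. (\<forall>i\<in>{1..<n}. a i \<bullet> x \<le> b i) \<and> a' \<bullet> x \<le> b'} = Q \<inter> {x. a' \<bullet> x \<le> b'}"
    unfolding Q_def by blast
  ultimately show ?thesis
    unfolding Let_def L_Q by (intro exI[of _ a'] exI[of _ b']) auto
qed

end
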